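(* Let $1\le k\le n$, let $\lambda=(\lambda_1,\ldots,\lambda_k)$ with $n-k\ge\lambda_1\ge\cdots\ge\lambda_k\ge0$, set $\lambda_{k+1}=0$, and let $D_\lambda$ be the weighted digraph with sources $e_1,\ldots,e_k$ and sinks $v_1,\ldots,v_k$ described in the context. For integers $C_1,\ldots,C_k$ with $0\le C_i\le\lambda_i$, let $\mathbf P(C)=(p_{11},\ldots,p_{kk})$, where $p_{ii}$ is the unique path in $D_\lambda$ from $e_i$ to $v_i$ whose only diagonal edge is the diagonal edge of row $i$ with label $C_i$. Then: (i) the paths $p_{11},\ldots,p_{kk}$ are pairwise vertex-disjoint if and only if $C_1\ge C_2\ge\cdots\ge C_k$; (ii) if $C_1\ge\cdots\ge C_k$, so that $(C_1,\ldots,C_k)$ describes a Catalan path $C$ constrained by the Young diagram of shape $\lambda$ in the $k\times(n-k)$ rectangle, then $\mathrm{pwt}(C)=(1/\alpha)^{\,n-k-\lambda_1}\,\mathrm{wt}(\mathbf P(C))$, where $\mathrm{wt}(\mathbf P(C))=\prod_{i=1}^k\mathrm{wt}(p_{ii})$.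
   Context: Digraph $D_\lambda$: vertices are points $(x,r)\in\mathbb Z^2$. For each row $i\in\{1,\ldots,k\}$ (a row of $\lambda_i$ parallelograms between horizontal lines $r=i-1$ and $r=i$): top vertices $(x,i-1)$ for $0\le x\le\lambda_i$, bottom vertices $(x,i)$ for $1\le x\le\lambda_i+1$; horizontal edges $(x,i-1)\to(x+1,i-1)$ for $0\le x<\lambda_i$ and $(x,i)\to(x+1,i)$ for $1\le x\le\lambda_i$; diagonal (southeast) edges $(t,i-1)\to(t+1,i)$ for $0\le t\le\lambda_i$, the diagonal edge with this $t$ having label $t$. Coinciding vertices/edges of consecutive rows are identified. Sources $e_i=(0,i-1)$, sinks $v_i=(\lambda_i+1,i)$. Weights: a diagonal edge of label $0$ has weight $1/\beta$; a diagonal edge of row $i$ with label $t>\lambda_{i+1}$ has weight $(1/\alpha)^{t-\lambda_{i+1}}$; all other edges have weight $1$. The weight of a path is the product of its edge weights. Catalan path constrained by $Y$ (Young diagram of shape $\lambda$ in the $k\times(n-k)$ rectangle, NW-justified, rows numbered top to bottom, vertical grid lines labelled $0,\ldots,n-k$ left to right): a south/west unit-step lattice path from the NE to the SW corner of the rectangle never crossing the southeast border of $Y$; it is encoded by $C_1\ge\cdots\ge C_k\ge0$, $C_i\le\lambda_i$, where $C_i$ is the grid-line label of its south step in row $i$. Let $L$ be the lattice path from the NE to the SW corner following the southeast border of $Y$. Edge weights: a south step with $C_i=0$ (on the west border of the rectangle) has weight $1/\beta$, other south steps weight $1$; a west step lying on $L$ has weight $1/\alpha$, other west steps weight $1$.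 $\mathrm{pwt}(C)$ is the product of these edge weights. *)

theory Defs
  imports Main
begin

definition lamx :: "nat \<Rightarrow> (nat \<Rightarrow> nat) \<Rightarrow> nat \<Rightarrow> nat" where
  "lamx k lam i = (if 1 \<le> i \<and> i \<le> k then lam i else 0)"

(* edges of the digraph D_lambda; vertices are points (x, r) of Z^2;
   coinciding edges of consecutive rows are identified automatically (set of pairs) *)
definition D_edges :: "nat \<Rightarrow> (nat \<Rightarrow> nat) \<Rightarrow> ((int \<times> int) \<times> (int \<times> int)) set" where
  "D_edges k lam =
     {((x, int i - 1), (x + 1, int i - 1)) | i x. 1 \<le> i \<and> i \<le> k \<and> 0 \<le> x \<and> x < int (lam i)}
   \<union> {((x, int i), (x + 1, int i)) | i x. 1 \<le> i \<and> i \<le> k \<and> 1 \<le> x \<and> x \<le> int (lam i)}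
   \<union> {((t, int i - 1), (t + 1, int i)) | i t. 1 \<le> i \<and> i \<le> k \<and> 0 \<le> t \<and> t \<le> int (lam i)}"

definition is_diag :: "(int \<times> int) \<times> (int \<times> int) \<Rightarrow> bool" where
  "is_diag e = (snd (snd e) = snd (fst e) + 1)"

definition diag_edge :: "nat \<Rightarrow> nat \<Rightarrow> (int \<times> int) \<times> (int \<times> int)" where
  "diag_edge i c = ((int c, int i - 1), (int c + 1, int i))"

(* edge weights: a diagonal edge from (t, i-1) to (t+1, i) lies in row i and has label t *)
definition D_wt :: "nat \<Rightarrow> (nat \<Rightarrow> nat) \<Rightarrow> 'a::field \<Rightarrow> 'a \<Rightarrow> (int \<times> int) \<times> (int \<times> int) \<Rightarrow> 'a" where
  "D_wt k lam \<alpha> \<beta> e =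
     (if is_diag e then
        (let t = fst (fst e); i = nat (snd (snd e)) in
         if t = 0 then 1 / \<beta>
         else if t > int (lamx k lam (Suc i)) then (1 / \<alpha>) ^ nat (t - int (lamx k lam (Suc i)))
         else 1)
      else 1)"

definition source :: "nat \<Rightarrow> int \<times> int" where
  "source i = (0, int i - 1)"

definition sink :: "(nat \<Rightarrow> nat) \<Rightarrow> nat \<Rightarrow> int \<times> int" where
  "sink lam i = (int (lam i) + 1, int i)"

definition is_path :: "((int \<times> int) \<times> (int \<times> int)) set \<Rightarrow> (int \<times> int) list \<Rightarrow> int \<times> int \<Rightarrow> int \<times> int \<Rightarrow> bool" where
  "is_path E ps a b = (ps \<noteq> [] \<and> hd ps = a \<and> last ps = b \<and> set (zip ps (tl ps)) \<subseteq> E)"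

definition Ppath :: "nat \<Rightarrow> (nat \<Rightarrow> nat) \<Rightarrow> (nat \<Rightarrow> nat) \<Rightarrow> nat \<Rightarrow> (int \<times> int) list" where
  "Ppath k lam C i = (THE ps. is_path (D_edges k lam) ps (source i) (sink lam i)
        \<and> {e \<in> set (zip ps (tl ps)). is_diag e} = {diag_edge i (C i)})"

definition path_wt :: "nat \<Rightarrow> (nat \<Rightarrow> nat) \<Rightarrow> 'a::field \<Rightarrow> 'a \<Rightarrow> (int \<times> int) list \<Rightarrow> 'a" where
  "path_wt k lam \<alpha> \<beta> ps = prod_list (map (D_wt k lam \<alpha> \<beta>) (zip ps (tl ps)))"

(* Catalan paths in the k x (n-k) rectangle: points (x, j), x = vertical grid line label
   (0..n-k, left to right), j = horizontal grid line (0 = top, k = bottom).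
   Encoding c_1 >= ... >= c_k extended by c_0 = n-k, c_{k+1} = 0. *)
definition cext :: "nat \<Rightarrow> nat \<Rightarrow> (nat \<Rightarrow> nat) \<Rightarrow> nat \<Rightarrow> nat" where
  "cext n k c j = (if j = 0 then n - k else if j \<le> k then c j else 0)"

(* unit steps of the lattice path from NE corner (n-k,0) to SW corner (0,k):
   south step of row i at grid line c_i, then west steps along line j from c_j to c_{j+1} *)
definition lattice_path :: "nat \<Rightarrow> nat \<Rightarrow> (nat \<Rightarrow> nat) \<Rightarrow> ((int \<times> int) \<times> (int \<times> int)) set" where
  "lattice_path n k c =
     {((int (c i), int i - 1), (int (c i), int i)) | i. 1 \<le> i \<and> i \<le> k}
   \<union> {((x, int j), (x - 1, int j)) | j x. j \<le> k \<and> int (cext n k c (Suc j)) < x \<and> x \<le> int (cext n k c j)}"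

(* L = southeast border of Y is the lattice path encoded by lambda itself *)
definition pwt :: "nat \<Rightarrow> nat \<Rightarrow> (nat \<Rightarrow> nat) \<Rightarrow> 'a::field \<Rightarrow> 'a \<Rightarrow> (nat \<Rightarrow> nat) \<Rightarrow> 'a" where
  "pwt n k lam \<alpha> \<beta> c =
     (\<Prod>e \<in> lattice_path n k c.
        if fst (fst e) = fst (snd e) then (if fst (fst e) = 0 then 1 / \<beta> else 1)
        else if e \<in> lattice_path n k lam then 1 / \<alpha> else 1)"

end

theory Submission imports Defs begin

text \<open>A path of D_lambda advances one unit to the right at every step, so a path from e_i to
v_i with exactly one diagonal edge, of label c, is forced: it runs along the line r = i - 1 up
to x = c, steps down, and runs along r = i to v_i. Hence p_ii lives on the lines i - 1 and i
only; non-adjacent paths are trivially disjoint, and p_ii, p_(i+1)(i+1) can only meet on the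
line r = i, which happens exactly when C_(i+1) > C_i. The weight of p_ii is that of its
diagonal edge. On the Catalan side, the south step of row i weighs 1/beta iff C_i = 0, and the
west steps on line j lying on L are those ending at x in (lambda_(j+1), C_j], contributing
(1/alpha)^(C_j - lambda_(j+1)); this matches the diagonal weight of p_jj for j \<ge> 1, while
the top line j = 0 (with C_0 = n - k) yields the extra factor (1/alpha)^(n - k - lambda_1).\<close>

definition row_height :: "nat \<Rightarrow> nat \<Rightarrow> nat \<Rightarrow> int" where
  "row_height c i m = (if m \<le> c then int i - 1 else int i)"

definition row_path :: "nat \<Rightarrow> nat \<Rightarrow> nat \<Rightarrow> (int \<times> int) list" where
  "row_path l c i = map (\<lambda>m. (int m, row_height c i m)) [0..<l + 2]"

lemma length_row_path [simp]: "length (row_path l c i) = l + 2"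
  by (simp add: row_path_def)

lemma nth_row_path: "m < l + 2 \<Longrightarrow> row_path l c i ! m = (int m, row_height c i m)"
  by (simp add: row_path_def del: upt_Suc)

lemma set_row_path: "set (row_path l c i) = (\<lambda>m. (int m, row_height c i m)) ` {0..<l + 2}"
  by (simp add: row_path_def del: upt_Suc)

lemma set_zip_tl_conv_nth: "set (zip ps (tl ps)) = {(ps ! m, ps ! Suc m) | m. Suc m < length ps}"
  by (auto simp: set_zip nth_tl)

lemma zip_tl_row_path:
  "zip (row_path l c i) (tl (row_path l c i)) =
     map (\<lambda>m. ((int m, row_height c i m), (int (Suc m), row_height c i (Suc m)))) [0..<l + 1]"
  by (rule nth_equalityI) (auto simp: row_path_def nth_tl simp del: upt_Suc)


lemma D_edges_step:
  "e \<in> D_edges k lam \<Longrightarrow>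
     fst (snd e) = fst (fst e) + 1 \<and> (snd (snd e) = snd (fst e) \<or> snd (snd e) = snd (fst e) + 1)"
  unfolding D_edges_def by auto

lemma D_walk_fst_nth:
  assumes "set (zip ps (tl ps)) \<subseteq> D_edges k lam" and "m < length ps"
  shows "fst (ps ! m) = fst (ps ! 0) + int m"
  using assms(2)
proof (induction m)
  case (Suc m)
  then have "(ps ! m, ps ! Suc m) \<in> D_edges k lam"
    using assms(1) unfolding set_zip_tl_conv_nth by blast
  with Suc show ?case using D_edges_step by fastforce
qed simp

lemma D_path_single_diag_eq_row_path:
  assumes path: "is_path (D_edges k lam) ps (source i) (sink lam i)"
    and diag: "{e \<in> set (zip ps (tl ps)). is_diag e} = {diag_edge i c}"
  shows "ps = row_path (lam i) c i"
proof -
  have ne: "ps \<noteq> []" and sub: "set (zip ps (tl ps)) \<subseteq> D_edges k lam"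
    using path unfolding is_path_def by auto
  have first: "ps ! 0 = (0, int i - 1)"
    using path ne by (simp add: is_path_def hd_conv_nth source_def)
  have edge: "(ps ! m, ps ! Suc m) \<in> D_edges k lam" if "Suc m < length ps" for m
    using sub that unfolding set_zip_tl_conv_nth by blast
  have x: "fst (ps ! m) = int m" if "m < length ps" for m
    using D_walk_fst_nth[OF sub that] first by simp
  have "fst (ps ! (length ps - 1)) = int (lam i) + 1"
    using path ne by (simp add: is_path_def last_conv_nth sink_def)
  then have len: "length ps = lam i + 2"
    using x[of "length ps - 1"] ne by simp
  have "diag_edge i c \<in> set (zip ps (tl ps))"
    using diag by blast
  then obtain m' where m': "Suc m' < length ps" "(ps ! m', ps ! Suc m') = diag_edge i c"
    unfolding set_zip_tl_conv_nth by auto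
  then have "m' = c"
    using x[of m'] by (simp add: diag_edge_def)
  have diag_iff: "is_diag (ps ! m, ps ! Suc m) \<longleftrightarrow> m = c" if "Suc m < length ps" for m
  proof
    assume "is_diag (ps ! m, ps ! Suc m)"
    then have "(ps ! m, ps ! Suc m) = diag_edge i c"
      using diag that unfolding set_zip_tl_conv_nth by blast
    then show "m = c" using x[of m] that by (simp add: diag_edge_def)
  next
    assume "m = c"
    with m' \<open>m' = c\<close> show "is_diag (ps ! m, ps ! Suc m)"
      by (simp add: diag_edge_def is_diag_def)
  qed
  have y: "snd (ps ! m) = row_height c i m" if "m < length ps" for m
    using that
  proof (induction m)
    case 0
    then show ?case using first by (simp add: row_height_def)
  next
    case (Suc m)
    have "snd (ps ! Suc m) = snd (ps ! m) \<or> snd (ps ! Suc m) = snd (ps ! m) + 1"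
      using D_edges_step[OF edge[OF Suc.prems]] by simp
    with Suc diag_iff[OF Suc.prems] show ?case
      by (cases "m = c") (auto simp: is_diag_def row_height_def)
  qed
  show ?thesis
    by (rule nth_equalityI) (auto simp: len x y nth_row_path prod_eq_iff)
qed

lemma row_path_is_path:
  assumes "1 \<le> i" "i \<le> k" "c \<le> lam i"
  shows "is_path (D_edges k lam) (row_path (lam i) c i) (source i) (sink lam i)"
proof -
  let ?p = "row_path (lam i) c i"
  have "(?p ! m, ?p ! Suc m) \<in> D_edges k lam" if "m \<le> lam i" for m
    using that assms unfolding D_edges_def
    by (cases m c rule: linorder_cases)
       (auto simp: nth_row_path row_height_def intro!: exI[of _ i])
  then have "set (zip ?p (tl ?p)) \<subseteq> D_edges k lam"
    unfolding set_zip_tl_conv_nth by fastforce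
  moreover have ne: "?p \<noteq> []"
    by (simp add: row_path_def)
  moreover have "last ?p = ?p ! (lam i + 1)"
    using ne by (simp add: last_conv_nth)
  then have "last ?p = sink lam i"
    using assms by (simp add: nth_row_path sink_def row_height_def)
  moreover have "hd ?p = source i"
    using ne by (simp add: hd_conv_nth nth_row_path source_def row_height_def)
  ultimately show ?thesis
    unfolding is_path_def by blast
qed

lemma row_path_diag_edges:
  assumes "c \<le> l"
  shows "{e \<in> set (zip (row_path l c i) (tl (row_path l c i))). is_diag e} = {diag_edge i c}"
  using assms unfolding zip_tl_row_path
  by (auto simp: is_diag_def row_height_def diag_edge_def split: if_splits)

lemma Ppath_eq_row_path:
  assumes "1 \<le> i" "i \<le> k" "C i \<le> lam i"
  shows "Ppath k lam C i = row_path (lam i) (C i) i"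
  unfolding Ppath_def
  by (rule the_equality)
     (use assms row_path_is_path row_path_diag_edges D_path_single_diag_eq_row_path in auto)


lemma row_paths_disjoint_if_not_adjacent:
  assumes "1 \<le> i" "Suc i < j"
  shows "set (row_path l c i) \<inter> set (row_path l' c' j) = {}"
  using assms unfolding set_row_path by (auto simp: row_height_def split: if_splits)

lemma row_paths_adjacent_disjoint_iff:
  assumes "1 \<le> i" "c' \<le> l'" "l' \<le> l"
  shows "set (row_path l c i) \<inter> set (row_path l' c' (Suc i)) = {} \<longleftrightarrow> c' \<le> c"
proof
  assume "set (row_path l c i) \<inter> set (row_path l' c' (Suc i)) = {}"
  moreover have "c < c' \<Longrightarrow>
      (int c', int i) \<in> set (row_path l c i) \<inter> set (row_path l' c' (Suc i))"
    using assms unfolding set_row_path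
    by (auto simp: row_height_def image_iff intro!: bexI[of _ c'])
  ultimately show "c' \<le> c" by fastforce
qed (use assms in \<open>auto simp: set_row_path row_height_def split: if_splits\<close>)

lemma Ppath_pairwise_disjoint_iff:
  assumes "\<forall>i. 1 \<le> i \<and> i < k \<longrightarrow> lam (Suc i) \<le> lam i"
    and "\<forall>i. 1 \<le> i \<and> i \<le> k \<longrightarrow> C i \<le> lam i"
  shows "(\<forall>i j. 1 \<le> i \<and> i < j \<and> j \<le> k \<longrightarrow> set (Ppath k lam C i) \<inter> set (Ppath k lam C j) = {})
     \<longleftrightarrow> (\<forall>i. 1 \<le> i \<and> i < k \<longrightarrow> C (Suc i) \<le> C i)"
proof -
  have Ppath: "Ppath k lam C i = row_path (lam i) (C i) i" if "1 \<le> i" "i \<le> k" for i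
    using Ppath_eq_row_path that assms(2) by blast
  have adjacent: "set (Ppath k lam C i) \<inter> set (Ppath k lam C (Suc i)) = {} \<longleftrightarrow> C (Suc i) \<le> C i"
    if "1 \<le> i" "i < k" for i
    using row_paths_adjacent_disjoint_iff[of i "C (Suc i)" "lam (Suc i)" "lam i" "C i"]
      that assms Ppath[of i] Ppath[of "Suc i"] by auto
  show ?thesis
  proof (intro iffI allI impI)
    fix i assume "\<forall>i j. 1 \<le> i \<and> i < j \<and> j \<le> k \<longrightarrow> set (Ppath k lam C i) \<inter> set (Ppath k lam C j) = {}"
      and "1 \<le> i \<and> i < k"
    then show "C (Suc i) \<le> C i" using adjacent by auto
  next
    fix i j assume "\<forall>i. 1 \<le> i \<and> i < k \<longrightarrow> C (Suc i) \<le> C i" and "1 \<le> i \<and> i < j \<and> j \<le> k"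
    then show "set (Ppath k lam C i) \<inter> set (Ppath k lam C j) = {}"
      using adjacent Ppath row_paths_disjoint_if_not_adjacent
      by (cases "j = Suc i") auto
  qed
qed


lemma path_wt_row_path:
  assumes "c \<le> l"
  shows "path_wt k lam \<alpha> \<beta> (row_path l c i) = D_wt k lam \<alpha> \<beta> (diag_edge i c)"
proof -
  have "path_wt k lam \<alpha> \<beta> (row_path l c i) =
     (\<Prod>m\<in>{0..<l + 1}. D_wt k lam \<alpha> \<beta> ((int m, row_height c i m), (int (Suc m), row_height c i (Suc m))))"
    unfolding path_wt_def zip_tl_row_path
    by (simp add: prod.distinct_set_conv_list[symmetric] comp_def del: upt_Suc)
  also have "\<dots> = (\<Prod>m\<in>{0..<l + 1}. if m = c then D_wt k lam \<alpha> \<beta> (diag_edge i c) else 1)"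
    by (rule prod.cong) (auto simp: D_wt_def is_diag_def row_height_def diag_edge_def)
  finally show ?thesis using assms by simp
qed

lemma D_wt_diag_edge:
  "D_wt k lam \<alpha> \<beta> (diag_edge i c) =
     (if c = 0 then 1 / \<beta> else if lamx k lam (Suc i) < c
      then (1 / \<alpha>) ^ (c - lamx k lam (Suc i)) else 1)"
  by (simp add: D_wt_def is_diag_def diag_edge_def Let_def nat_diff_distrib)

lemma lattice_path_eq_steps:
  "lattice_path n k c =
     (\<lambda>i. ((int (c i), int i - 1), (int (c i), int i))) ` {1..k}
   \<union> (\<lambda>(j, x). ((x, int j), (x - 1, int j))) `
       (SIGMA j:{0..k}. {int (cext n k c (Suc j))<..int (cext n k c j)})"
  unfolding lattice_path_def by auto

lemma prod_if_greaterThanAtMost: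
  fixes a b lo hi :: int
  assumes "a \<le> lo" "b \<le> hi"
  shows "(\<Prod>x\<in>{a<..b}. if lo < x \<and> x \<le> hi then u else 1) = u ^ nat (b - lo)"
proof -
  have "(\<Prod>x\<in>{a<..b}. if lo < x \<and> x \<le> hi then u else 1)
      = (\<Prod>x\<in>{a<..b} \<inter> {x. lo < x \<and> x \<le> hi}. u) * (\<Prod>x\<in>{a<..b} \<inter> - {x. lo < x \<and> x \<le> hi}. 1)"
    by (rule prod.If_cases) simp
  also have "{a<..b} \<inter> {x. lo < x \<and> x \<le> hi} = {lo<..b}"
    using assms by auto
  finally show ?thesis by simp
qed

lemma pwt_eq_prod_lines:
  assumes "\<forall>i. 1 \<le> i \<and> i \<le> k \<longrightarrow> C i \<le> lam i"
  shows "pwt n k lam \<alpha> \<beta> C = (\<Prod>i\<in>{1..k}. if C i = 0 then 1 / \<beta> else 1)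
     * (\<Prod>j\<in>{0..k}. (1 / \<alpha>) ^ nat (int (cext n k C j) - int (cext n k lam (Suc j))))"
proof -
  define g :: "(int \<times> int) \<times> (int \<times> int) \<Rightarrow> 'a" where
    "g e = (if fst (fst e) = fst (snd e) then (if fst (fst e) = 0 then 1 / \<beta> else 1)
            else if e \<in> lattice_path n k lam then 1 / \<alpha> else 1)" for e
  define south where "south i = ((int (C i), int i - 1), (int (C i), int i))" for i
  define west :: "nat \<times> int \<Rightarrow> (int \<times> int) \<times> (int \<times> int)"
    where "west = (\<lambda>(j, x). ((x, int j), (x - 1, int j)))"
  define I where "I = (SIGMA j:{0..k}. {int (cext n k C (Suc j))<..int (cext n k C j)})"
  have "pwt n k lam \<alpha> \<beta> C = prod g (south ` {1..k} \<union> west ` I)"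
    unfolding pwt_def g_def south_def west_def I_def lattice_path_eq_steps ..
  also have "\<dots> = prod g (south ` {1..k}) * prod g (west ` I)"
    by (rule prod.union_disjoint) (auto simp: I_def south_def west_def)
  also have "prod g (south ` {1..k}) = (\<Prod>i\<in>{1..k}. if C i = 0 then 1 / \<beta> else 1)"
    by (subst prod.reindex) (auto simp: inj_on_def south_def g_def)
  also have "prod g (west ` I) = prod (g \<circ> west) I"
    by (rule prod.reindex) (auto simp: inj_on_def west_def)
  also have "\<dots> = (\<Prod>j\<in>{0..k}. \<Prod>x\<in>{int (cext n k C (Suc j))<..int (cext n k C j)}. g (west (j, x)))"
    unfolding I_def by (subst prod.Sigma) auto
  also have "\<dots> = (\<Prod>j\<in>{0..k}. (1 / \<alpha>) ^ nat (int (cext n k C j) - int (cext n k lam (Suc j))))"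
  proof (rule prod.cong[OF refl])
    fix j assume j: "j \<in> {0..k}"
    have west_weight: "g (west (j, x)) =
        (if int (cext n k lam (Suc j)) < x \<and> x \<le> int (cext n k lam j) then 1 / \<alpha> else 1)" for x
      using j unfolding g_def west_def lattice_path_def by auto
    show "(\<Prod>x\<in>{int (cext n k C (Suc j))<..int (cext n k C j)}. g (west (j, x)))
       = (1 / \<alpha>) ^ nat (int (cext n k C j) - int (cext n k lam (Suc j)))"
      unfolding west_weight
      by (rule prod_if_greaterThanAtMost) (use j assms in \<open>auto simp: cext_def\<close>)
  qed
  finally show ?thesis .
qed

lemma pwt_eq_Ppath_weights:
  assumes "1 \<le> k" "lam 1 \<le> n - k"
    and "\<forall>i. 1 \<le> i \<and> i \<le> k \<longrightarrow> C i \<le> lam i"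
  shows "pwt n k lam \<alpha> \<beta> C
     = (1 / \<alpha>) ^ (n - k - lam 1) * (\<Prod>i = 1..k. path_wt k lam \<alpha> \<beta> (Ppath k lam C i))"
proof -
  let ?line = "\<lambda>j. (1 / \<alpha>) ^ nat (int (cext n k C j) - int (cext n k lam (Suc j)))"
  have Ppath_wt: "path_wt k lam \<alpha> \<beta> (Ppath k lam C i) = (if C i = 0 then 1 / \<beta> else 1) * ?line i"
    if "i \<in> {1..k}" for i
  proof -
    have "lamx k lam (Suc i) = cext n k lam (Suc i)" "cext n k C i = C i"
      using that by (auto simp: lamx_def cext_def)
    then show ?thesis
      using that assms(3)
      by (simp add: Ppath_eq_row_path path_wt_row_path D_wt_diag_edge nat_diff_distrib)
  qed
  have "{0..k} = insert 0 {1..k}" by auto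
  moreover have "nat (int (cext n k C 0) - int (cext n k lam 1)) = n - k - lam 1"
    using assms(1,2) by (simp add: cext_def)
  ultimately have top_line: "(\<Prod>j\<in>{0..k}. ?line j) = (1 / \<alpha>) ^ (n - k - lam 1) * (\<Prod>j\<in>{1..k}. ?line j)"
    by simp
  have "pwt n k lam \<alpha> \<beta> C = (\<Prod>i\<in>{1..k}. if C i = 0 then 1 / \<beta> else 1) * (\<Prod>j\<in>{0..k}. ?line j)"
    by (rule pwt_eq_prod_lines[OF assms(3)])
  also have "\<dots> = (1 / \<alpha>) ^ (n - k - lam 1) * (\<Prod>i\<in>{1..k}. (if C i = 0 then 1 / \<beta> else 1) * ?line i)"
    unfolding top_line prod.distrib by (simp only: ac_simps)
  finally show ?thesis
    by (simp add: Ppath_wt)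
qed

theorem lemma2:
  fixes n k :: nat and lam C :: "nat \<Rightarrow> nat" and \<alpha> \<beta> :: "'a::field"
  assumes "1 \<le> k" and "k \<le> n"
    and "lam 1 \<le> n - k"
    and "\<forall>i. 1 \<le> i \<and> i < k \<longrightarrow> lam (Suc i) \<le> lam i"
    and "\<forall>i. 1 \<le> i \<and> i \<le> k \<longrightarrow> C i \<le> lam i"
  shows "((\<forall>i j. 1 \<le> i \<and> i < j \<and> j \<le> k \<longrightarrow>
              set (Ppath k lam C i) \<inter> set (Ppath k lam C j) = {})
          \<longleftrightarrow> (\<forall>i. 1 \<le> i \<and> i < k \<longrightarrow> C (Suc i) \<le> C i))
       \<and> ((\<forall>i. 1 \<le> i \<and> i < k \<longrightarrow> C (Suc i) \<le> C i) \<longrightarrow>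
           pwt n k lam \<alpha> \<beta> C
             = (1 / \<alpha>) ^ (n - k - lam 1) * (\<Prod>i = 1..k. path_wt k lam \<alpha> \<beta> (Ppath k lam C i)))"
  using Ppath_pairwise_disjoint_iff[OF assms(4,5)] pwt_eq_Ppath_weights[OF assms(1,3,5)]
  by blast

end
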